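(* In the iAPG setting described in the context, assume $\mu>0$ and let $\kappa=\frac{L_g}{\gamma_{\mathrm{dec}}\mu}$. For any $c\in[0,1)$ define $\psi_k=F(x^{(k)})-F^*+(1-(1-c)\alpha_k)\frac{\gamma_k}{2}\|x^*-z^{(k)}\|^2$ for $k\ge0$. Then for all $k\ge0$, $$\psi_{k+1}\le\prod_{j=0}^k(1-c\alpha_j)\Big(\psi_0+\frac{\sqrt\kappa}{2(1-c)^2\underline L}\sum_{t=0}^k\frac{\varepsilon_t^2}{\prod_{j=0}^{t-1}(1-c\alpha_j)}\Big),$$ with the convention that an empty product equals $1$. Moreover, if in addition $\varepsilon_k=0$ for all $k$, then for all $k\ge0$, $$F(x^{(k+1)})-F^*+\frac{\gamma_{k+1}}2\|x^*-z^{(k+1)}\|^2\le\Big(1-\sqrt{1/\kappa}\Big)^{k+1}\Big(F(x^{(0)})-F^*+\frac{\gamma_0}{2}\|x^*-z^{(0)}\|^2\Big).$$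
   Context: iAPG setting. Let $g,h:\mathbb R^n\to\mathbb R$ and $r:\mathbb R^n\to\mathbb R\cup\{+\infty\}$, where $g$ is convex, $\mu$-strongly convex for some $\mu\ge0$, and differentiable with $L_g$-Lipschitz gradient ($L_g>0$); $h$ is convex and differentiable with $L_h$-Lipschitz gradient; $r$ is proper, closed and convex. Put $H=h+r$, $F=g+H$, and assume $F$ attains its minimum value $F^*$ at some point $x^*$. Fix constants $\gamma_{\mathrm{dec}}\in(0,1)$ and $\underline L>0$ with $\mu\le\underline L\le L_g$. We consider points $x^{(k)},z^{(k)},y^{(k)}\in\mathbb R^n$ and scalars $\eta_k>0,\alpha_k>0,\gamma_k>0,\varepsilon_k\ge0$ ($k\ge0$) such that $x^{(0)}=z^{(0)}\in\mathrm{dom}(H)$, $\gamma_0\ge\mu$, and for every $k\ge0$: (i) $\gamma_{\mathrm{dec}}/L_g<\eta_k\le1/\underline L$; (ii) $\gamma_{k+1}=\alpha_k^2/\eta_k=(1-\alpha_k)\gamma_k+\alpha_k\mu$; (iii) $y^{(k)}=\frac{1}{\alpha_k\gamma_k+\gamma_{k+1}}\big(\alpha_k\gamma_k z^{(k)}+\gamma_{k+1}x^{(k)}\big)$; (iv) $\mathrm{dist}\big(0,\ \nabla g(y^{(k)})+\tfrac1{\eta_k}(x^{(k+1)}-y^{(k)})+\partial H(x^{(k+1)})\big)\le\varepsilon_k$; (v) $g(x^{(k+1)})\le g(y^{(k)})+\langle\nabla g(y^{(k)}),x^{(k+1)}-y^{(k)}\rangle+\frac1{2\eta_k}\|x^{(k+1)}-y^{(k)}\|^2$;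 (vi) $z^{(k+1)}=x^{(k)}+\frac1{\alpha_k}(x^{(k+1)}-x^{(k)})$. Here $\partial$ denotes the convex subdifferential and $\mathrm{dist}(0,S)=\inf_{s\in S}\|s\|$. *)

theory Defs
  imports "HOL-Analysis.Analysis"
begin

definition proper_fun :: "('a \<Rightarrow> ereal) \<Rightarrow> bool" where
  "proper_fun f \<longleftrightarrow> (\<forall>x. f x \<noteq> -\<infinity>) \<and> (\<exists>x. f x \<noteq> \<infinity>)"

definition epigraph_e :: "('a \<Rightarrow> ereal) \<Rightarrow> ('a \<times> real) set" where
  "epigraph_e f = {(x, t). f x \<le> ereal t}"

definition convex_fun_e :: "('a::real_vector \<Rightarrow> ereal) \<Rightarrow> bool" where
  "convex_fun_e f \<longleftrightarrow> convex (epigraph_e f)"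

definition closed_fun_e :: "('a::topological_space \<Rightarrow> ereal) \<Rightarrow> bool" where
  "closed_fun_e f \<longleftrightarrow> closed (epigraph_e f)"

definition edom :: "('a \<Rightarrow> ereal) \<Rightarrow> 'a set" where
  "edom f = {x. f x < \<infinity>}"

definition subdiff :: "('a::real_inner \<Rightarrow> ereal) \<Rightarrow> 'a \<Rightarrow> 'a set" where
  "subdiff f x = {v. f x < \<infinity> \<and> (\<forall>y. f x + ereal (inner v (y - x)) \<le> f y)}"

definition strongly_convex :: "real \<Rightarrow> ('a::real_inner \<Rightarrow> real) \<Rightarrow> bool" where
  "strongly_convex \<mu> f \<longleftrightarrow> convex_on UNIV (\<lambda>x. f x - \<mu> / 2 * (norm x)\<^sup>2)"

end

theory Submission
  imports Defs
begin

text \<open>One iteration contracts the energy \<open>F(x\<^sub>k) - F\<^sup>* + \<gamma>\<^sub>k/2 \<parallel>x\<^sup>* - z\<^sub>k\<parallel>\<^sup>2\<close> by the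
  factor \<open>1 - \<alpha>\<^sub>k\<close> up to an error \<open>\<alpha>\<^sub>k \<epsilon>\<^sub>k \<parallel>x\<^sup>* - z\<^sub>k\<^sub>+\<^sub>1\<parallel>\<close>: the strong convexity
  lower bound for \<open>g\<close> at \<open>y\<^sub>k\<close>, the descent condition and the subgradient inequality for \<open>H\<close>
  at \<open>x\<^sub>k\<^sub>+\<^sub>1\<close> are evaluated at \<open>x\<^sub>k\<close> and \<open>x\<^sup>*\<close> and averaged with weights \<open>1 - \<alpha>\<^sub>k\<close>, \<open>\<alpha>\<^sub>k\<close>,
  while the new point \<open>z\<^sub>k\<^sub>+\<^sub>1\<close> is controlled by convexity of the squared norm.
  Keeping only the fraction \<open>1 - (1 - c) \<alpha>\<^sub>k\<^sub>+\<^sub>1\<close> of the quadratic term frees a square that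
  absorbs the error, at the price of the weaker factor \<open>1 - c \<alpha>\<^sub>k\<close> and a term in \<open>\<epsilon>\<^sub>k\<^sup>2\<close>;
  unrolling gives the first bound. Since \<open>\<alpha>\<^sub>k\<^sup>2 = \<eta>\<^sub>k \<gamma>\<^sub>k\<^sub>+\<^sub>1 \<ge> \<eta>\<^sub>k \<mu> > 1/\<kappa>\<close>, the exact
  method contracts by at least \<open>1 - \<surd>(1/\<kappa>)\<close> per step.\<close>

lemma strongly_convex_gradient_lower_bound:
  fixes g :: "'a::real_inner \<Rightarrow> real"
  assumes sc: "strongly_convex \<mu> g" and grad: "\<And>u. GDERIV g u :> grad_g u"
  shows "g y + inner (grad_g y) (u - y) + \<mu> / 2 * (norm (u - y))\<^sup>2 \<le> g u"
proof -
  define d where "d = u - y"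
  define f where "f t = g (y + t *\<^sub>R d) - \<mu> / 2 * (norm (y + t *\<^sub>R d))\<^sup>2" for t :: real
  have cvx: "convex_on UNIV (\<lambda>x. g x - \<mu> / 2 * (norm x)\<^sup>2)"
    using sc unfolding strongly_convex_def .
  have "convex_on UNIV f"
  proof (rule convex_onI)
    fix t a b :: real assume "0 < t" "t < 1"
    then show "f ((1 - t) *\<^sub>R a + t *\<^sub>R b) \<le> (1 - t) * f a + t * f b"
      using convex_onD[OF cvx, of t "y + a *\<^sub>R d" "y + b *\<^sub>R d"]
      unfolding f_def by (simp add: algebra_simps)
  qed simp
  moreover have "(f has_real_derivative inner d (grad_g y) - \<mu> * inner y d) (at 0)"
  proof -
    have "(g has_derivative (\<lambda>h. inner h (grad_g y))) (at (y + 0 *\<^sub>R d))"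
      using grad[of y] by (simp add: gderiv_def)
    then have "((\<lambda>t. g (y + t *\<^sub>R d)) has_derivative (\<lambda>t. t * inner d (grad_g y))) (at 0)"
    proof -
      have "((\<lambda>t. y + t *\<^sub>R d) has_derivative (\<lambda>t. t *\<^sub>R d)) (at 0)"
        by (auto intro!: derivative_eq_intros)
      from diff_chain_at[OF this \<open>(g has_derivative _) _\<close>] show ?thesis
        by (simp add: o_def)
    qed
    moreover have "((\<lambda>t. (norm (y + t *\<^sub>R d))\<^sup>2) has_derivative (\<lambda>t. t * (2 * inner y d))) (at 0)"
      unfolding power2_norm_eq_inner
      by (auto intro!: derivative_eq_intros simp: inner_commute algebra_simps)
    ultimately have "(f has_derivative (\<lambda>t. t * (inner d (grad_g y) - \<mu> * inner y d))) (at 0)"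
      unfolding f_def by (rule has_derivative_eq_rhs[OF has_derivative_diff[OF _ has_derivative_mult_right]])
        (auto simp: algebra_simps)
    then show ?thesis
      by (simp add: has_field_derivative_def mult_commute_abs)
  qed
  ultimately have "inner d (grad_g y) - \<mu> * inner y d \<le> f 1 - f 0"
    using convex_on_imp_above_tangent[of UNIV f 0 1] by simp
  then show ?thesis
    unfolding f_def d_def by (simp add: power2_norm_eq_inner inner_simps inner_commute algebra_simps)
qed

lemma norm_scaleR_add_power2_le:
  fixes a b :: "'a::real_inner"
  assumes "0 \<le> p" "0 \<le> q"
  shows "(norm (p *\<^sub>R a + q *\<^sub>R b))\<^sup>2 \<le> (p + q) * (p * (norm a)\<^sup>2 + q * (norm b)\<^sup>2)"
proof -
  have "(p + q) * (p * (norm a)\<^sup>2 + q * (norm b)\<^sup>2) - (norm (p *\<^sub>R a + q *\<^sub>R b))\<^sup>2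
      = p * q * (norm (a - b))\<^sup>2"
    by (simp add: power2_norm_eq_inner inner_simps inner_commute algebra_simps)
  with assms show ?thesis
    by (metis diff_ge_0_iff_ge mult_nonneg_nonneg zero_le_power2)
qed

lemma estimate_sequence_quadratic_bound:
  fixes x z xs G :: "'a::real_inner"
  assumes "0 < \<alpha>" "\<alpha> \<le> 1" "0 < \<gamma>" "0 \<le> \<mu>" "0 < \<eta>"
    and \<gamma>\<eta>: "\<gamma>' * \<eta> = \<alpha>\<^sup>2" and \<gamma>': "\<gamma>' = (1 - \<alpha>) * \<gamma> + \<alpha> * \<mu>"
    and y: "y = (1 / (\<alpha> * \<gamma> + \<gamma>')) *\<^sub>R ((\<alpha> * \<gamma>) *\<^sub>R z + \<gamma>' *\<^sub>R x)"
    and z': "z' = x + (1 / \<alpha>) *\<^sub>R (x' - x)"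
    and x': "x' = y - \<eta> *\<^sub>R G"
  shows "\<gamma>' / 2 * (norm (xs - z'))\<^sup>2 \<le> (1 - \<alpha>) * \<gamma> / 2 * (norm (xs - z))\<^sup>2 + \<alpha> * \<mu> / 2 * (norm (xs - y))\<^sup>2
           + (1 - \<alpha>) * inner G (x - y) + \<alpha> * inner G (xs - y) + \<eta> / 2 * inner G G"
proof -
  have "0 < \<gamma>'"
    using \<gamma>\<eta> \<open>0 < \<alpha>\<close> \<open>0 < \<eta>\<close> by (metis zero_less_mult_pos2 zero_less_power)
  define A where "A = ((1 - \<alpha>) * \<gamma>) *\<^sub>R (xs - z) + (\<alpha> * \<mu>) *\<^sub>R (xs - y)"
  have y_inner: "(\<alpha> * \<gamma> + \<gamma>') * inner y b = \<alpha> * \<gamma> * inner z b + \<gamma>' * inner x b" for b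
  proof -
    have "0 < \<alpha> * \<gamma> + \<gamma>'"
      using \<open>0 < \<gamma>'\<close> assms(1,3) by (simp add: add_pos_pos)
    then show ?thesis
      using y by (simp add: inner_simps divide_simps)
  qed
  have z'_inner: "\<alpha> * inner z' b = \<alpha> * inner x b + inner x' b - inner x b" for b
    unfolding z' using \<open>0 < \<alpha>\<close> by (simp add: inner_simps field_simps)
  have x'_inner: "inner x' b = inner y b - \<eta> * inner G b" for b
    unfolding x' by (simp add: inner_simps)
  \<comment> \<open>the coupling \<open>\<gamma>' \<eta> = \<alpha>\<^sup>2\<close> and the choice of \<open>y\<close> enter only through these two identities\<close>
  have A_G: "\<gamma>' *\<^sub>R (xs - z') = A + \<alpha> *\<^sub>R G"
  proof (rule vector_eq_rdot[THEN iffD1], rule allI)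
    fix b
    have "\<alpha> * (\<gamma>' * (inner xs b - inner z' b)) = \<alpha> * ((1 - \<alpha>) * \<gamma> * (inner xs b - inner z b)
        + \<alpha> * \<mu> * (inner xs b - inner y b) + \<alpha> * inner G b)"
      using y_inner[of b] z'_inner[of b] x'_inner[of b] \<gamma>\<eta> \<gamma>' by algebra
    then show "inner (\<gamma>' *\<^sub>R (xs - z')) b = inner (A + \<alpha> *\<^sub>R G) b"
      unfolding A_def using \<open>0 < \<alpha>\<close> by (simp add: inner_simps)
  qed
  have A_dir: "(\<alpha> / \<gamma>') *\<^sub>R A = (1 - \<alpha>) *\<^sub>R x + \<alpha> *\<^sub>R xs - y"
  proof (rule vector_eq_rdot[THEN iffD1], rule allI)
    fix b
    have "\<alpha> * ((1 - \<alpha>) * \<gamma> * (inner xs b - inner z b) + \<alpha> * \<mu> * (inner xs b - inner y b))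
        = \<gamma>' * ((1 - \<alpha>) * inner x b + \<alpha> * inner xs b - inner y b)"
      using y_inner[of b] \<gamma>' by algebra
    then have "\<alpha> / \<gamma>' * ((1 - \<alpha>) * \<gamma> * (inner xs b - inner z b) + \<alpha> * \<mu> * (inner xs b - inner y b))
        = (1 - \<alpha>) * inner x b + \<alpha> * inner xs b - inner y b"
      using \<open>0 < \<gamma>'\<close> by (metis nonzero_mult_div_cancel_left times_divide_eq_left less_irrefl)
    then show "inner ((\<alpha> / \<gamma>') *\<^sub>R A) b = inner ((1 - \<alpha>) *\<^sub>R x + \<alpha> *\<^sub>R xs - y) b"
      unfolding A_def by (simp add: inner_simps algebra_simps)
  qed
  have norm_A: "(norm A)\<^sup>2 \<le> \<gamma>' * ((1 - \<alpha>) * \<gamma> * (norm (xs - z))\<^sup>2 + \<alpha> * \<mu> * (norm (xs - y))\<^sup>2)"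
    unfolding A_def \<gamma>' using assms(1-4) by (intro norm_scaleR_add_power2_le) auto
  have inner_A: "\<alpha> * inner A G = \<gamma>' * ((1 - \<alpha>) * inner G (x - y) + \<alpha> * inner G (xs - y))"
  proof -
    have "\<alpha> * inner A G = \<gamma>' * inner ((\<alpha> / \<gamma>') *\<^sub>R A) G"
      using \<open>0 < \<gamma>'\<close> by (simp add: inner_simps)
    then show ?thesis
      unfolding A_dir by (simp add: inner_simps inner_commute algebra_simps)
  qed
  have "\<gamma>' * (\<gamma>' * (norm (xs - z'))\<^sup>2) = (norm A)\<^sup>2 + 2 * (\<alpha> * inner A G) + \<gamma>' * \<eta> * inner G G"
  proof -
    have "\<gamma>' * (\<gamma>' * (norm (xs - z'))\<^sup>2) = (norm (A + \<alpha> *\<^sub>R G))\<^sup>2"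
      unfolding A_G[symmetric] by (simp add: power_mult_distrib power2_eq_square)
    then show ?thesis
      unfolding \<gamma>\<eta> by (simp only: power2_norm_eq_inner inner_simps inner_commute[of G A])
        (simp add: power2_eq_square algebra_simps)
  qed
  also have "\<dots> \<le> \<gamma>' * ((1 - \<alpha>) * \<gamma> * (norm (xs - z))\<^sup>2 + \<alpha> * \<mu> * (norm (xs - y))\<^sup>2
      + 2 * ((1 - \<alpha>) * inner G (x - y) + \<alpha> * inner G (xs - y)) + \<eta> * inner G G)"
    using norm_A unfolding inner_A by (simp add: algebra_simps)
  finally have "\<gamma>' * (norm (xs - z'))\<^sup>2 \<le> (1 - \<alpha>) * \<gamma> * (norm (xs - z))\<^sup>2 + \<alpha> * \<mu> * (norm (xs - y))\<^sup>2
      + 2 * ((1 - \<alpha>) * inner G (x - y) + \<alpha> * inner G (xs - y)) + \<eta> * inner G G"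
    using \<open>0 < \<gamma>'\<close> by (rule mult_left_le_imp_le)
  then show ?thesis
    by (simp add: field_simps)
qed

lemma proximal_gradient_lower_bound:
  fixes u y x' G d v w :: "'a::real_inner"
  assumes "0 < \<eta>" and x': "x' = y - \<eta> *\<^sub>R G" and w: "w = v + G - d"
    and lower: "gy + inner d (u - y) + \<mu> / 2 * (norm (u - y))\<^sup>2 \<le> gu"
    and descent: "gx' \<le> gy + inner d (x' - y) + 1 / (2 * \<eta>) * (norm (x' - y))\<^sup>2"
    and subgradient: "Hx' + inner w (u - x') \<le> Hu"
  shows "gx' + Hx' + inner G (u - y) + \<eta> / 2 * inner G G + \<mu> / 2 * (norm (u - y))\<^sup>2
           + inner v (u - x') \<le> gu + Hu"
proof -
  have norm_sq: "(norm (x' - y))\<^sup>2 = \<eta>\<^sup>2 * inner G G"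
    unfolding x' by (simp add: power_mult_distrib dot_square_norm)
  have "gx' \<le> gy - \<eta> * inner d G + \<eta> / 2 * inner G G"
    using descent \<open>0 < \<eta>\<close> unfolding norm_sq by (simp add: x' inner_simps power2_eq_square)
  moreover have "inner w (u - x') = inner v (u - x') + inner G (u - y) + \<eta> * inner G G
      - inner d (u - y) - \<eta> * inner d G"
    unfolding w x' by (simp add: inner_simps algebra_simps)
  ultimately show ?thesis
    using lower subgradient by linarith
qed

lemma iapg_step_inequality:
  fixes x z y x' z' xs d v w :: "'a::real_inner"
  assumes "0 < \<alpha>" "\<alpha> \<le> 1" "0 < \<gamma>" "0 \<le> \<mu>" "0 < \<eta>"
    and \<gamma>\<eta>: "\<gamma>' * \<eta> = \<alpha>\<^sup>2" and \<gamma>': "\<gamma>' = (1 - \<alpha>) * \<gamma> + \<alpha> * \<mu>"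
    and y: "y = (1 / (\<alpha> * \<gamma> + \<gamma>')) *\<^sub>R ((\<alpha> * \<gamma>) *\<^sub>R z + \<gamma>' *\<^sub>R x)"
    and z': "z' = x + (1 / \<alpha>) *\<^sub>R (x' - x)"
    and lower_x: "gy + inner d (x - y) + \<mu> / 2 * (norm (x - y))\<^sup>2 \<le> gx"
    and lower_xs: "gy + inner d (xs - y) + \<mu> / 2 * (norm (xs - y))\<^sup>2 \<le> gs"
    and descent: "gx' \<le> gy + inner d (x' - y) + 1 / (2 * \<eta>) * (norm (x' - y))\<^sup>2"
    and subgradient_x: "Hx' + inner w (x - x') \<le> Hx"
    and subgradient_xs: "Hx' + inner w (xs - x') \<le> Hs"
    and v: "v = d + (1 / \<eta>) *\<^sub>R (x' - y) + w"
  shows "gx' + Hx' - (gs + Hs) + \<gamma>' / 2 * (norm (xs - z'))\<^sup>2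
           \<le> (1 - \<alpha>) * (gx + Hx - (gs + Hs) + \<gamma> / 2 * (norm (xs - z))\<^sup>2) - \<alpha> * inner v (xs - z')"
proof -
  define G where "G = (1 / \<eta>) *\<^sub>R (y - x')"
  have x': "x' = y - \<eta> *\<^sub>R G" and w: "w = v + G - d"
    unfolding G_def v using \<open>0 < \<eta>\<close> by (simp_all add: algebra_simps)
  have "(1 - \<alpha>) * (gx' + Hx' + inner G (x - y) + \<eta> / 2 * inner G G + \<mu> / 2 * (norm (x - y))\<^sup>2
      + inner v (x - x')) \<le> (1 - \<alpha>) * (gx + Hx)"
    using proximal_gradient_lower_bound[OF \<open>0 < \<eta>\<close> x' w lower_x descent subgradient_x] \<open>\<alpha> \<le> 1\<close>
    by (intro mult_left_mono) auto
  moreover have "\<alpha> * (gx' + Hx' + inner G (xs - y) + \<eta> / 2 * inner G G + \<mu> / 2 * (norm (xs - y))\<^sup>2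
      + inner v (xs - x')) \<le> \<alpha> * (gs + Hs)"
    using proximal_gradient_lower_bound[OF \<open>0 < \<eta>\<close> x' w lower_xs descent subgradient_xs] \<open>0 < \<alpha>\<close>
    by (intro mult_left_mono) auto
  moreover have "(1 - \<alpha>) * inner v (x - x') + \<alpha> * inner v (xs - x') = \<alpha> * inner v (xs - z')"
    unfolding z' using \<open>0 < \<alpha>\<close> by (simp add: inner_simps algebra_simps)
  moreover have "0 \<le> (1 - \<alpha>) * (\<mu> / 2 * (norm (x - y))\<^sup>2)"
    using assms(2,4) by simp
  moreover note estimate_sequence_quadratic_bound[OF assms(1-5) \<gamma>\<eta> \<gamma>' y z' x', of xs]
  ultimately show ?thesis
    by (simp add: algebra_simps inner_simps) argo
qed

lemma le_mult_infdist_0: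
  fixes S :: "'a::real_normed_vector set"
  assumes "S \<noteq> {}" "0 \<le> b" and bound: "\<And>s. s \<in> S \<Longrightarrow> a \<le> b * norm s"
  shows "a \<le> b * infdist 0 S"
proof (cases "b = 0")
  case True
  then show ?thesis using assms by auto
next
  case False
  then have "a / b \<le> infdist 0 S"
    unfolding infdist_notempty[OF \<open>S \<noteq> {}\<close>] using assms
    by (intro cINF_greatest) (auto simp: pos_divide_le_eq mult.commute)
  then show ?thesis
    using False \<open>0 \<le> b\<close> by (simp add: pos_divide_le_eq mult.commute)
qed

lemma damped_energy_step:
  fixes a a' c \<gamma> \<gamma>' \<eta> f f' e D D' :: real
  assumes "0 < a" "a \<le> 1" "0 \<le> c" "c < 1" "0 < a'" "0 \<le> \<gamma>" "0 < \<gamma>'" "0 < \<eta>" "0 \<le> f"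
    and a_sq: "a\<^sup>2 = \<eta> * \<gamma>'"
    and step: "f' + \<gamma>' / 2 * D'\<^sup>2 \<le> (1 - a) * (f + \<gamma> / 2 * D\<^sup>2) + a * e * D'"
  shows "f' + (1 - (1 - c) * a') * \<gamma>' / 2 * D'\<^sup>2
           \<le> (1 - c * a) * (f + (1 - (1 - c) * a) * \<gamma> / 2 * D\<^sup>2 + \<eta> / (2 * (1 - c)\<^sup>2 * a') * e\<^sup>2)"
proof -
  define A where "A = (1 - c) * a' * \<gamma>'"
  have "0 < A"
    unfolding A_def using assms by simp
  have "(1 - a) * f \<le> (1 - c * a) * f"
    using assms by (intro mult_right_mono) (auto simp: mult_left_le_one_le)
  moreover have "(1 - a) * (\<gamma> / 2 * D\<^sup>2) \<le> (1 - c * a) * ((1 - (1 - c) * a) * \<gamma> / 2 * D\<^sup>2)"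
  proof -
    have "(1 - c * a) * (1 - (1 - c) * a) = (1 - a) + c * (1 - c) * a\<^sup>2"
      by (simp add: algebra_simps power2_eq_square)
    moreover have "0 \<le> c * (1 - c) * a\<^sup>2"
      using \<open>0 \<le> c\<close> \<open>c < 1\<close> by simp
    ultimately have "(1 - a) * (\<gamma> / 2 * D\<^sup>2) \<le> ((1 - c * a) * (1 - (1 - c) * a)) * (\<gamma> / 2 * D\<^sup>2)"
      using \<open>0 \<le> \<gamma>\<close> by (intro mult_right_mono) auto
    then show ?thesis
      by (simp add: mult_ac)
  qed
  \<comment> \<open>the error term absorbs the extra quadratic \<open>A / 2 * D'\<^sup>2\<close> by completing the square\<close>
  moreover have "a * e * D' - A / 2 * D'\<^sup>2 \<le> (1 - c * a) * (\<eta> / (2 * (1 - c)\<^sup>2 * a') * e\<^sup>2)"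
  proof -
    have "a * e * D' - A / 2 * D'\<^sup>2 = (a * e)\<^sup>2 / (2 * A) - (a * e - A * D')\<^sup>2 / (2 * A)"
      using \<open>0 < A\<close> by (simp add: field_simps power2_eq_square)
    also have "\<dots> \<le> (a * e)\<^sup>2 / (2 * A)"
      using \<open>0 < A\<close> by simp
    also have "\<dots> = \<eta> / (2 * (1 - c) * a') * e\<^sup>2"
      using assms unfolding A_def power_mult_distrib a_sq by (simp add: field_simps)
    also have "\<dots> = (1 - c) * (\<eta> / (2 * (1 - c)\<^sup>2 * a') * e\<^sup>2)"
      using \<open>0 < a'\<close> \<open>c < 1\<close>
      by (simp add: power2_eq_square divide_simps del: of_nat_numeral)
    also have "\<dots> \<le> (1 - c * a) * (\<eta> / (2 * (1 - c)\<^sup>2 * a') * e\<^sup>2)"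
      using assms mult_left_mono[of a 1 c] by (intro mult_right_mono) auto
    finally show ?thesis .
  qed
  moreover have "f' + (1 - (1 - c) * a') * \<gamma>' / 2 * D'\<^sup>2 = f' + \<gamma>' / 2 * D'\<^sup>2 - A / 2 * D'\<^sup>2"
    unfolding A_def by (simp add: field_simps)
  ultimately show ?thesis
    using step by (simp only: distrib_left)
qed

lemma damped_recursion_unroll:
  fixes \<psi> q b :: "nat \<Rightarrow> real"
  assumes q: "\<And>k. 0 < q k" and step: "\<And>k. \<psi> (Suc k) \<le> q k * (\<psi> k + b k)"
  shows "\<psi> (Suc k) \<le> (\<Prod>j\<le>k. q j) * (\<psi> 0 + (\<Sum>t\<le>k. b t / (\<Prod>j<t. q j)))"
proof (induction k)
  case 0
  then show ?case using step[of 0] by simp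
next
  case (Suc k)
  have sum_Suc: "(\<Sum>t\<le>Suc k. b t / (\<Prod>j<t. q j))
      = (\<Sum>t\<le>k. b t / (\<Prod>j<t. q j)) + b (Suc k) / (\<Prod>j\<le>k. q j)"
    by (simp only: sum.atMost_Suc lessThan_Suc_atMost)
  have "(\<Prod>j\<le>k. q j) \<noteq> 0"
    using q by (metis less_irrefl prod_pos)
  moreover have "q' * (P * (p + s) + b') = P * q' * (p + (s + b' / P))" if "P \<noteq> 0" for P q' p s b' :: real
    using that by (simp add: field_simps)
  ultimately have rearrange: "q (Suc k) * ((\<Prod>j\<le>k. q j) * (\<psi> 0 + (\<Sum>t\<le>k. b t / (\<Prod>j<t. q j))) + b (Suc k))
      = (\<Prod>j\<le>Suc k. q j) * (\<psi> 0 + (\<Sum>t\<le>Suc k. b t / (\<Prod>j<t. q j)))"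
    unfolding prod.atMost_Suc sum_Suc by blast
  have "\<psi> (Suc (Suc k)) \<le> q (Suc k) * (\<psi> (Suc k) + b (Suc k))"
    by (rule step)
  also have "\<dots> \<le> q (Suc k) * ((\<Prod>j\<le>k. q j) * (\<psi> 0 + (\<Sum>t\<le>k. b t / (\<Prod>j<t. q j))) + b (Suc k))"
    using Suc q[of "Suc k"] by (intro mult_left_mono add_right_mono) auto
  finally show ?case
    unfolding rearrange .
qed

lemma contraction_power_bound:
  fixes E :: "nat \<Rightarrow> real"
  assumes "0 \<le> q" and step: "\<And>k. E (Suc k) \<le> q * E k"
  shows "E k \<le> q ^ k * E 0"
proof (induction k)
  case (Suc k)
  have "E (Suc k) \<le> q * E k"
    by (rule step)
  also have "\<dots> \<le> q * (q ^ k * E 0)"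
    using Suc \<open>0 \<le> q\<close> by (rule mult_left_mono)
  finally show ?case
    by (simp add: mult.assoc)
qed simp

locale iapg =
  fixes g :: "'a::real_inner \<Rightarrow> real" and grad_g :: "'a \<Rightarrow> 'a" and H :: "'a \<Rightarrow> ereal"
    and \<mu> L_low :: real and xs :: 'a and x y z :: "nat \<Rightarrow> 'a" and \<eta> \<alpha> \<gamma> \<epsilon> :: "nat \<Rightarrow> real"
  assumes g_strongly_convex: "strongly_convex \<mu> g"
    and g_grad: "\<And>u. GDERIV g u :> grad_g u"
    and H_not_MInf: "\<And>u. H u \<noteq> -\<infinity>"
    and xs_min: "\<And>u. ereal (g xs) + H xs \<le> ereal (g u) + H u"
    and mu_nonneg: "0 \<le> \<mu>" and mu_le: "\<mu> \<le> L_low" and L_low_pos: "0 < L_low"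
    and H_x0: "H (x 0) < \<infinity>" and gamma_0: "\<mu> \<le> \<gamma> 0"
    and eta_pos: "\<And>k. 0 < \<eta> k" and alpha_pos: "\<And>k. 0 < \<alpha> k"
    and gamma_pos: "\<And>k. 0 < \<gamma> k"
    and eta_le: "\<And>k. \<eta> k \<le> 1 / L_low"
    and gamma_Suc: "\<And>k. \<gamma> (Suc k) = (\<alpha> k)\<^sup>2 / \<eta> k"
    and gamma_Suc': "\<And>k. \<gamma> (Suc k) = (1 - \<alpha> k) * \<gamma> k + \<alpha> k * \<mu>"
    and y_def: "\<And>k. y k = (1 / (\<alpha> k * \<gamma> k + \<gamma> (Suc k))) *\<^sub>R
                    ((\<alpha> k * \<gamma> k) *\<^sub>R z k + \<gamma> (Suc k) *\<^sub>R x k)"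
    and inexact_prox: "\<And>k. let S = (\<lambda>v. grad_g (y k) + (1 / \<eta> k) *\<^sub>R (x (Suc k) - y k) + v)
                                 ` subdiff H (x (Suc k))
                           in S \<noteq> {} \<and> infdist 0 S \<le> \<epsilon> k"
    and descent: "\<And>k. g (x (Suc k)) \<le> g (y k) + inner (grad_g (y k)) (x (Suc k) - y k)
                        + 1 / (2 * \<eta> k) * (norm (x (Suc k) - y k))\<^sup>2"
    and z_Suc: "\<And>k. z (Suc k) = x k + (1 / \<alpha> k) *\<^sub>R (x (Suc k) - x k)"
begin

lemma gamma_ge_mu: "\<mu> \<le> \<gamma> k" and alpha_le_one: "\<alpha> k \<le> 1"
proof -
  have alpha: "\<alpha> k \<le> 1" if "\<mu> \<le> \<gamma> k" for k
  proof (rule ccontr)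
    assume "\<not> \<alpha> k \<le> 1"
    then have "(1 - \<alpha> k) * \<gamma> k \<le> (1 - \<alpha> k) * \<mu>"
      using that by (intro mult_left_mono_neg) auto
    then have "\<gamma> (Suc k) \<le> \<mu>"
      using gamma_Suc'[of k] by (simp add: algebra_simps)
    moreover have "1 / \<eta> k < (\<alpha> k)\<^sup>2 / \<eta> k"
      using \<open>\<not> \<alpha> k \<le> 1\<close> eta_pos by (simp add: divide_strict_right_mono one_less_power)
    moreover have "L_low \<le> 1 / \<eta> k"
      using eta_le[of k] eta_pos[of k] L_low_pos by (simp add: field_simps)
    ultimately show False
      using gamma_Suc[of k] mu_le by linarith
  qed
  have gamma: "\<mu> \<le> \<gamma> k" for k
  proof (induction k)
    case 0
    then show ?case using gamma_0 .
  next
    case (Suc k)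
    then have "(1 - \<alpha> k) * \<mu> \<le> (1 - \<alpha> k) * \<gamma> k"
      using alpha by (intro mult_left_mono) auto
    then show ?case
      using gamma_Suc'[of k] by (simp add: algebra_simps)
  qed
  show "\<mu> \<le> \<gamma> k" by (rule gamma)
  show "\<alpha> k \<le> 1" by (rule alpha[OF gamma])
qed

lemma mu_eta_le_alpha_sq: "\<mu> * \<eta> k \<le> (\<alpha> k)\<^sup>2"
  using gamma_ge_mu[of "Suc k"] eta_pos[of k] gamma_Suc[of k] by (simp add: field_simps)

lemma H_x_finite: "H (x k) \<noteq> \<infinity>"
proof (cases k)
  case 0
  then show ?thesis using H_x0 by simp
next
  case (Suc j)
  then have "subdiff H (x k) \<noteq> {}"
    using inexact_prox[of j] unfolding Let_def by auto
  then show ?thesis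
    unfolding subdiff_def by auto
qed

lemma H_xs_finite: "H xs \<noteq> \<infinity>"
  using xs_min[of "x 0"] H_x_finite[of 0] H_not_MInf[of "x 0"] by auto

lemma H_finite_cases:
  assumes "H u \<noteq> \<infinity>"
  obtains a where "H u = ereal a"
  using assms H_not_MInf[of u] by (cases "H u") auto

lemma F_eq_real: "H u \<noteq> \<infinity> \<Longrightarrow> ereal (g u) + H u = ereal (g u + real_of_ereal (H u))"
  by (erule H_finite_cases) simp

text \<open>The junk value \<open>real_of_ereal \<infinity> = 0\<close> never occurs: \<open>H\<close> is finite at all iterates and at \<open>xs\<close>.\<close>

definition gap :: "nat \<Rightarrow> real" where
  "gap k = g (x k) + real_of_ereal (H (x k)) - (g xs + real_of_ereal (H xs))"

lemma gap_eq: "ereal (g (x k)) + H (x k) - (ereal (g xs) + H xs) = ereal (gap k)"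
  unfolding gap_def F_eq_real[OF H_x_finite] F_eq_real[OF H_xs_finite] by simp

lemma gap_nonneg: "0 \<le> gap k"
  using xs_min[of "x k"] unfolding gap_def F_eq_real[OF H_x_finite] F_eq_real[OF H_xs_finite] by simp

text \<open>\<open>lyapunov c\<close> is the paper's \<open>\<psi>\<close>; \<open>lyapunov 1\<close> is the energy of the exact case.\<close>

definition lyapunov :: "real \<Rightarrow> nat \<Rightarrow> real" where
  "lyapunov c k = gap k + (1 - (1 - c) * \<alpha> k) * \<gamma> k / 2 * (norm (xs - z k))\<^sup>2"

lemma subdiff_H_real:
  assumes "w \<in> subdiff H u" "H v \<noteq> \<infinity>"
  shows "real_of_ereal (H u) + inner w (v - u) \<le> real_of_ereal (H v)"
proof -
  have "H u \<noteq> \<infinity>" and "H u + ereal (inner w (v - u)) \<le> H v"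
    using assms(1) unfolding subdiff_def by auto
  then show ?thesis
    using assms(2) by (elim H_finite_cases) simp
qed

lemma lyapunov_1: "lyapunov 1 k = gap k + \<gamma> k / 2 * (norm (xs - z k))\<^sup>2"
  unfolding lyapunov_def by simp

lemma gamma_Suc_mult_eta: "\<gamma> (Suc k) * \<eta> k = (\<alpha> k)\<^sup>2"
  using gamma_Suc[of k] eta_pos[of k] by simp

lemma energy_step:
  "lyapunov 1 (Suc k) \<le> (1 - \<alpha> k) * lyapunov 1 k + \<alpha> k * \<epsilon> k * norm (xs - z (Suc k))"
proof -
  define S where "S = (\<lambda>v. grad_g (y k) + (1 / \<eta> k) *\<^sub>R (x (Suc k) - y k) + v) ` subdiff H (x (Suc k))"
  have "S \<noteq> {}" and "infdist 0 S \<le> \<epsilon> k"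
    using inexact_prox[of k] unfolding Let_def S_def by auto
  have "lyapunov 1 (Suc k) - (1 - \<alpha> k) * lyapunov 1 k \<le> (\<alpha> k * norm (xs - z (Suc k))) * norm s"
    if "s \<in> S" for s
  proof -
    obtain w where w: "w \<in> subdiff H (x (Suc k))"
      and s: "s = grad_g (y k) + (1 / \<eta> k) *\<^sub>R (x (Suc k) - y k) + w"
      using \<open>s \<in> S\<close> unfolding S_def by auto
    have "lyapunov 1 (Suc k) \<le> (1 - \<alpha> k) * lyapunov 1 k - \<alpha> k * inner s (xs - z (Suc k))"
      unfolding lyapunov_1 gap_def
      by (rule iapg_step_inequality[OF alpha_pos alpha_le_one gamma_pos mu_nonneg eta_pos
            gamma_Suc_mult_eta gamma_Suc' y_def z_Suc
            strongly_convex_gradient_lower_bound[OF g_strongly_convex g_grad]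
            strongly_convex_gradient_lower_bound[OF g_strongly_convex g_grad] descent
            subdiff_H_real[OF w H_x_finite] subdiff_H_real[OF w H_xs_finite] s])
    moreover have "- inner s (xs - z (Suc k)) \<le> norm s * norm (xs - z (Suc k))"
      using norm_cauchy_schwarz[of "-s" "xs - z (Suc k)"] by simp
    then have "- (\<alpha> k * inner s (xs - z (Suc k))) \<le> \<alpha> k * (norm s * norm (xs - z (Suc k)))"
      using mult_left_mono[of _ _ "\<alpha> k"] alpha_pos[of k] by fastforce
    ultimately show ?thesis
      by (simp add: mult_ac)
  qed
  then have "lyapunov 1 (Suc k) - (1 - \<alpha> k) * lyapunov 1 k \<le> (\<alpha> k * norm (xs - z (Suc k))) * infdist 0 S"
    using \<open>S \<noteq> {}\<close> alpha_pos[of k] by (intro le_mult_infdist_0) auto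
  also have "\<dots> \<le> (\<alpha> k * norm (xs - z (Suc k))) * \<epsilon> k"
    using \<open>infdist 0 S \<le> \<epsilon> k\<close> alpha_pos[of k] by (intro mult_left_mono) auto
  finally show ?thesis
    by (simp add: mult_ac)
qed

lemma lyapunov_bound:
  assumes "0 \<le> c" "c < 1" and B: "\<And>k. \<eta> k / \<alpha> (Suc k) \<le> B"
  shows "lyapunov c (Suc k) \<le> (\<Prod>j\<le>k. 1 - c * \<alpha> j) *
           (lyapunov c 0 + B / (2 * (1 - c)\<^sup>2) * (\<Sum>t\<le>k. (\<epsilon> t)\<^sup>2 / (\<Prod>j<t. 1 - c * \<alpha> j)))"
proof -
  have factor_pos: "0 < 1 - c * \<alpha> j" for j
    using mult_left_mono[OF alpha_le_one[of j] \<open>0 \<le> c\<close>] \<open>c < 1\<close> by simp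
  have "lyapunov c (Suc k) \<le> (1 - c * \<alpha> k) * (lyapunov c k + B / (2 * (1 - c)\<^sup>2) * (\<epsilon> k)\<^sup>2)" for k
  proof -
    have "lyapunov c (Suc k) \<le> (1 - c * \<alpha> k) *
        (lyapunov c k + \<eta> k / (2 * (1 - c)\<^sup>2 * \<alpha> (Suc k)) * (\<epsilon> k)\<^sup>2)"
      unfolding lyapunov_def
      by (rule damped_energy_step[OF alpha_pos alpha_le_one assms(1,2) alpha_pos
            less_imp_le[OF gamma_pos] gamma_pos eta_pos gap_nonneg])
        (use gamma_Suc_mult_eta[of k] energy_step[of k] in \<open>simp_all add: lyapunov_1 mult.commute\<close>)
    also have "\<dots> \<le> (1 - c * \<alpha> k) * (lyapunov c k + B / (2 * (1 - c)\<^sup>2) * (\<epsilon> k)\<^sup>2)"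
    proof -
      have "\<eta> k / (2 * (1 - c)\<^sup>2 * \<alpha> (Suc k)) = \<eta> k / \<alpha> (Suc k) / (2 * (1 - c)\<^sup>2)"
        by simp
      also have "\<dots> \<le> B / (2 * (1 - c)\<^sup>2)"
        using B[of k] \<open>c < 1\<close> by (intro divide_right_mono) auto
      finally show ?thesis
        using factor_pos[of k] by (intro mult_left_mono add_left_mono mult_right_mono) auto
    qed
    finally show ?thesis .
  qed
  then have "lyapunov c (Suc k) \<le> (\<Prod>j\<le>k. 1 - c * \<alpha> j) *
      (lyapunov c 0 + (\<Sum>t\<le>k. B / (2 * (1 - c)\<^sup>2) * (\<epsilon> t)\<^sup>2 / (\<Prod>j<t. 1 - c * \<alpha> j)))"
    by (rule damped_recursion_unroll[where q = "\<lambda>j. 1 - c * \<alpha> j", OF factor_pos])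
  then show ?thesis
    by (simp add: sum_distrib_left)
qed

lemma lyapunov_linear_rate:
  assumes "\<And>k. \<epsilon> k = 0" and "\<And>k. 1 - \<alpha> k \<le> q"
  shows "lyapunov 1 k \<le> q ^ k * lyapunov 1 0"
proof (rule contraction_power_bound)
  show "0 \<le> q"
    using assms(2)[of 0] alpha_le_one[of 0] by linarith
  fix k
  have "0 \<le> lyapunov 1 k"
    unfolding lyapunov_1 using gap_nonneg[of k] gamma_pos[of k] by simp
  then have "(1 - \<alpha> k) * lyapunov 1 k \<le> q * lyapunov 1 k"
    using assms(2) by (intro mult_right_mono)
  then show "lyapunov 1 (Suc k) \<le> q * lyapunov 1 k"
    using energy_step[of k] assms(1) by simp
qed

lemma inv_sqrt_lt_alpha:
  assumes "\<And>k. 1 / \<kappa> < \<mu> * \<eta> k"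
  shows "sqrt (1 / \<kappa>) < \<alpha> k"
proof -
  have "sqrt (1 / \<kappa>) < sqrt ((\<alpha> k)\<^sup>2)"
    using assms[of k] mu_eta_le_alpha_sq[of k] by (simp only: real_sqrt_less_iff)
  then show ?thesis
    using alpha_pos[of k] by simp
qed

lemma eta_div_alpha_le:
  assumes "0 < \<kappa>" and "\<And>k. 1 / \<kappa> < \<mu> * \<eta> k"
  shows "\<eta> k / \<alpha> (Suc k) \<le> sqrt \<kappa> / L_low"
proof -
  have "1 / \<alpha> (Suc k) \<le> sqrt \<kappa>"
    using inv_sqrt_lt_alpha[OF assms(2), of "Suc k"] assms(1) alpha_pos[of "Suc k"]
    by (simp add: real_sqrt_divide field_simps)
  then have "\<eta> k * (1 / \<alpha> (Suc k)) \<le> 1 / L_low * sqrt \<kappa>"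
    using eta_le[of k] eta_pos[of k] L_low_pos alpha_pos[of "Suc k"] by (intro mult_mono) auto
  then show ?thesis
    by simp
qed

end

theorem theorem3p5:
  fixes g h :: "'a::euclidean_space \<Rightarrow> real"
    and grad_g grad_h :: "'a \<Rightarrow> 'a"
    and r :: "'a \<Rightarrow> ereal"
    and \<mu> L_g L_h \<gamma>_dec L_low c :: real
    and xs :: 'a
    and x z y :: "nat \<Rightarrow> 'a"
    and \<eta> \<alpha> \<gamma> \<epsilon> :: "nat \<Rightarrow> real"
  defines "H \<equiv> (\<lambda>u. ereal (h u) + r u)"
  defines "F \<equiv> (\<lambda>u. ereal (g u) + H u)"
  defines "\<kappa> \<equiv> L_g / (\<gamma>_dec * \<mu>)"
  assumes g_convex: "convex_on UNIV g"
    and g_strong: "strongly_convex \<mu> g"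
    and g_grad: "\<And>u. GDERIV g u :> grad_g u"
    and Lg_pos: "L_g > 0"
    and g_lip: "L_g-lipschitz_on UNIV grad_g"
    and h_convex: "convex_on UNIV h"
    and h_grad: "\<And>u. GDERIV h u :> grad_h u"
    and h_lip: "L_h-lipschitz_on UNIV grad_h"
    and r_proper: "proper_fun r"
    and r_closed: "closed_fun_e r"
    and r_convex: "convex_fun_e r"
    and xs_min: "\<And>u. F xs \<le> F u"
    and \<gamma>dec: "0 < \<gamma>_dec" "\<gamma>_dec < 1"
    and L_low: "L_low > 0" "\<mu> \<le> L_low" "L_low \<le> L_g"
    and mu_pos: "\<mu> > 0"
    and c: "0 \<le> c" "c < 1"
    and init: "x 0 = z 0" "x 0 \<in> edom H" "\<gamma> 0 \<ge> \<mu>"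
    and pos: "\<And>k. \<eta> k > 0" "\<And>k. \<alpha> k > 0" "\<And>k. \<gamma> k > 0" "\<And>k. \<epsilon> k \<ge> 0"
    and step_i: "\<And>k. \<gamma>_dec / L_g < \<eta> k \<and> \<eta> k \<le> 1 / L_low"
    and step_ii: "\<And>k. \<gamma> (Suc k) = (\<alpha> k)\<^sup>2 / \<eta> k \<and>
                         (\<alpha> k)\<^sup>2 / \<eta> k = (1 - \<alpha> k) * \<gamma> k + \<alpha> k * \<mu>"
    and step_iii: "\<And>k. y k = (1 / (\<alpha> k * \<gamma> k + \<gamma> (Suc k))) *\<^sub>R (
                         (\<alpha> k * \<gamma> k) *\<^sub>R z k + \<gamma> (Suc k) *\<^sub>R x k)"
    and step_iv: "\<And>k. let S = (\<lambda>v. grad_g (y k) + (1 / \<eta> k) *\<^sub>R (x (Suc k) - y k) + v)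
                                 ` subdiff H (x (Suc k))
                       in S \<noteq> {} \<and> infdist 0 S \<le> \<epsilon> k"
    and step_v: "\<And>k. g (x (Suc k)) \<le> g (y k) + inner (grad_g (y k)) (x (Suc k) - y k)
                        + 1 / (2 * \<eta> k) * (norm (x (Suc k) - y k))\<^sup>2"
    and step_vi: "\<And>k. z (Suc k) = x k + (1 / \<alpha> k) *\<^sub>R (x (Suc k) - x k)"
  shows "(let \<psi> = (\<lambda>k. F (x k) - F xs
                   + ereal ((1 - (1 - c) * \<alpha> k) * \<gamma> k / 2 * (norm (xs - z k))\<^sup>2))
          in \<forall>k. \<psi> (Suc k) \<le> ereal (\<Prod>j\<le>k. 1 - c * \<alpha> j) *
                 (\<psi> 0 + ereal (sqrt \<kappa> / (2 * (1 - c)\<^sup>2 * L_low) *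
                    (\<Sum>t\<le>k. (\<epsilon> t)\<^sup>2 / (\<Prod>j<t. 1 - c * \<alpha> j)))))
     \<and> ((\<forall>k. \<epsilon> k = 0) \<longrightarrow>
         (\<forall>k. F (x (Suc k)) - F xs + ereal (\<gamma> (Suc k) / 2 * (norm (xs - z (Suc k)))\<^sup>2)
              \<le> ereal ((1 - sqrt (1 / \<kappa>)) ^ (Suc k)) *
                 (F (x 0) - F xs + ereal (\<gamma> 0 / 2 * (norm (xs - z 0))\<^sup>2))))"
proof -
  interpret iapg g grad_g H \<mu> L_low xs x y z \<eta> \<alpha> \<gamma> \<epsilon>
  proof
    show "H u \<noteq> -\<infinity>" for u
      using r_proper unfolding H_def proper_fun_def by (cases "r u") auto
    show "ereal (g xs) + H xs \<le> ereal (g u) + H u" for u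
      using xs_min[of u] unfolding F_def .
    show "H (x 0) < \<infinity>"
      using init(2) unfolding edom_def by simp
  qed (use assms in \<open>auto simp: Let_def\<close>)
  have \<kappa>: "0 < \<kappa>" "1 / \<kappa> < \<mu> * \<eta> k" for k
    using step_i[of k] Lg_pos \<gamma>dec mu_pos by (auto simp: \<kappa>_def field_simps)
  have F_lyapunov: "F (x k) - F xs + ereal ((1 - (1 - c) * \<alpha> k) * \<gamma> k / 2 * (norm (xs - z k))\<^sup>2)
      = ereal (lyapunov c k)" for c k
    unfolding F_def lyapunov_def by (simp add: gap_eq)
  have F_energy: "F (x k) - F xs + ereal (\<gamma> k / 2 * (norm (xs - z k))\<^sup>2) = ereal (lyapunov 1 k)" for k
    using F_lyapunov[where c = 1] by simp
  have "lyapunov c (Suc k) \<le> (\<Prod>j\<le>k. 1 - c * \<alpha> j) * (lyapunov c 0 +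
      sqrt \<kappa> / (2 * (1 - c)\<^sup>2 * L_low) * (\<Sum>t\<le>k. (\<epsilon> t)\<^sup>2 / (\<Prod>j<t. 1 - c * \<alpha> j)))" for k
    using lyapunov_bound[OF c eta_div_alpha_le[OF \<kappa>]] by (simp add: mult.commute)
  moreover have "lyapunov 1 (Suc k) \<le> (1 - sqrt (1 / \<kappa>)) ^ Suc k * lyapunov 1 0"
    if "\<forall>k. \<epsilon> k = 0" for k
    using that inv_sqrt_lt_alpha[OF \<kappa>(2)] by (intro lyapunov_linear_rate) (auto simp: less_imp_le)
  ultimately show ?thesis
    unfolding Let_def F_lyapunov F_energy by simp
qed

end
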